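(* Let $L,R$ be nonempty subsets of a group $G$ such that $\mathcal{W}(L)$ and $\mathcal{W}(R)$ are subgroups of $G$, let $s\in G$, and let $k_s$ be the minimum strong connection length in $\langle L\rangle s\langle R\rangle$. If $k_s$ is finite, the double coset $\langle L\rangle s\langle R\rangle$ is the union of exactly $k_s$ strongly connected components of $2\mathrm{S}(G;L,R)$, all of the same cardinality; if $k_s$ is infinite it is the union of infinitely many strongly connected components. Moreover, if $k_s$ is finite and $L\cap N_G(L)\neq\emptyset$ or $R\cap N_G(R)\neq\emptyset$, then all strongly connected components contained in $\langle L\rangle s\langle R\rangle$ are isomorphic as digraphs.
   Context: For nonempty subsets $L,R$ of a group $G$, the two-sided group digraph $2\mathrm{S}(G;L,R)$ has vertex set $G$ and a directed arc $(g,h)$ if and only if $h=l^{-1}gr$ for some $l\in L$, $r\in R$. For nonempty $S$, $\mathcal{W}(S)$ is the set of elements expressible as finite products $s_1\cdots s_n$, $n\ge1$, $s_i\in S$. $g$ is strongly connected to $h$ if there are directed paths from $g$ to $h$ and from $h$ to $g$. Assuming $\mathcal{W}(L),\mathcal{W}(R)$ are subgroups, the minimum strong connection length $k_s$ in $\langle L\rangle s\langle R\rangle$ is the minimum positive length of a word $w$ whose letters all lie in $L$ or all lie in $L^{-1}$ such that $ws$ is strongly connected to $s$ (equivalently, the minimum positive length of a word $w$ with letters all in $R$ or all in $R^{-1}$ such that $sw$ is strongly connected to $s$); it is infinite if no such word exists. $N_G(L)=\{g\in G:g^{-1}Lg=L\}$. *)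

theory Defs
  imports "HOL-Algebra.Algebra" "HOL-Library.Equipollence" "HOL-Library.Extended_Nat"
begin

definition wprod :: "('a, 'b) monoid_scheme \<Rightarrow> 'a list \<Rightarrow> 'a" where
  "wprod G xs = foldr (\<lambda>x y. x \<otimes>\<^bsub>G\<^esub> y) xs \<one>\<^bsub>G\<^esub>"

definition W :: "('a, 'b) monoid_scheme \<Rightarrow> 'a set \<Rightarrow> 'a set" where
  "W G S = {wprod G xs | xs. xs \<noteq> [] \<and> set xs \<subseteq> S}"

definition arc2S :: "('a, 'b) monoid_scheme \<Rightarrow> 'a set \<Rightarrow> 'a set \<Rightarrow> 'a \<Rightarrow> 'a \<Rightarrow> bool" where
  "arc2S G L R g h \<longleftrightarrow> g \<in> carrier G \<and> h \<in> carrier G \<and>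
     (\<exists>l\<in>L. \<exists>r\<in>R. h = inv\<^bsub>G\<^esub> l \<otimes>\<^bsub>G\<^esub> g \<otimes>\<^bsub>G\<^esub> r)"

definition path2S :: "('a, 'b) monoid_scheme \<Rightarrow> 'a set \<Rightarrow> 'a set \<Rightarrow> 'a \<Rightarrow> 'a \<Rightarrow> bool" where
  "path2S G L R = (arc2S G L R)\<^sup>*\<^sup>*"

definition strongly_conn :: "('a, 'b) monoid_scheme \<Rightarrow> 'a set \<Rightarrow> 'a set \<Rightarrow> 'a \<Rightarrow> 'a \<Rightarrow> bool" where
  "strongly_conn G L R g h \<longleftrightarrow> path2S G L R g h \<and> path2S G L R h g"

definition SCCs :: "('a, 'b) monoid_scheme \<Rightarrow> 'a set \<Rightarrow> 'a set \<Rightarrow> 'a set set" where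
  "SCCs G L R = {{h \<in> carrier G. strongly_conn G L R g h} | g. g \<in> carrier G}"

definition double_coset :: "('a, 'b) monoid_scheme \<Rightarrow> 'a set \<Rightarrow> 'a \<Rightarrow> 'a set \<Rightarrow> 'a set" where
  "double_coset G L s R =
     {a \<otimes>\<^bsub>G\<^esub> s \<otimes>\<^bsub>G\<^esub> b | a b. a \<in> generate G L \<and> b \<in> generate G R}"

(* minimum strong connection length k_s (infinity if no such word) *)
definition min_sc_length :: "('a, 'b) monoid_scheme \<Rightarrow> 'a set \<Rightarrow> 'a set \<Rightarrow> 'a \<Rightarrow> enat" where
  "min_sc_length G L R s = Inf {enat (length xs) | xs. xs \<noteq> [] \<and>
      (set xs \<subseteq> L \<or> set xs \<subseteq> (\<lambda>l. inv\<^bsub>G\<^esub> l) ` L) \<and>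
      strongly_conn G L R (wprod G xs \<otimes>\<^bsub>G\<^esub> s) s}"

definition normaliser :: "('a, 'b) monoid_scheme \<Rightarrow> 'a set \<Rightarrow> 'a set" where
  "normaliser G L = {g \<in> carrier G. (\<lambda>l. inv\<^bsub>G\<^esub> g \<otimes>\<^bsub>G\<^esub> l \<otimes>\<^bsub>G\<^esub> g) ` L = L}"

definition sub_digraph_iso :: "('a, 'b) monoid_scheme \<Rightarrow> 'a set \<Rightarrow> 'a set \<Rightarrow> 'a set \<Rightarrow> 'a set \<Rightarrow> bool" where
  "sub_digraph_iso G L R C1 C2 \<longleftrightarrow> (\<exists>f. bij_betw f C1 C2 \<and>
     (\<forall>g\<in>C1. \<forall>h\<in>C1. arc2S G L R g h \<longleftrightarrow> arc2S G L R (f g) (f h)))"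

end

theory Submission
  imports Defs
begin

text \<open>A path of length \<open>n\<close> from \<open>g\<close> ends at \<open>x\<^sup>-\<^sup>1 g y\<close>, where \<open>x\<close> is a product of \<open>n\<close> letters
  of \<open>L\<close> and \<open>y\<close> one of \<open>n\<close> letters of \<open>R\<close>; call such a pair \<open>(x, y)\<close> balanced. Since \<open>W(L)\<close>
  and \<open>W(R)\<close> are groups, the identity is a product of letters of some positive length on each
  side, so balanced pairs can be padded, inverted and conjugated by \<open>W(L)\<close> or \<open>W(R)\<close>. Hence
  reachability is symmetric, the strong components are the orbits \<open>g \<mapsto> x\<^sup>-\<^sup>1 g y\<close>, and
  multiplication by \<open>W(L)\<close> on the left (by \<open>W(R)\<close> on the right) permutes them.
  Fix a letter \<open>l\<close> of \<open>L\<close>. Every component inside \<open>W(L) s W(R)\<close> is the component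
  \<open>scc_pow n\<close> of \<open>l\<^sup>n s\<close>, which depends only on \<open>n\<close> modulo the least period of
  \<open>scc_pow\<close>; this period is \<open>k\<^sub>s\<close>, so \<open>k\<^sub>s\<close> is always finite. Multiplication by \<open>l\<^sup>n\<close> maps
  \<open>scc_pow 0\<close> bijectively onto \<open>scc_pow n\<close>, and multiplication by powers of an element of
  \<open>L \<inter> N(L)\<close> (or, on the right, of \<open>R \<inter> N(R)\<close>) also preserves arcs.\<close>

definition prods_len :: "('a, 'b) monoid_scheme \<Rightarrow> 'a set \<Rightarrow> nat \<Rightarrow> 'a set" where
  "prods_len G S n = {wprod G xs | xs. length xs = n \<and> set xs \<subseteq> S}"

context monoid
begin

lemma wprod_Nil [simp]: "wprod G [] = \<one>"
  by (simp add: wprod_def)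

lemma wprod_Cons [simp]: "wprod G (x # xs) = x \<otimes> wprod G xs"
  by (simp add: wprod_def)

lemma wprod_closed: "set xs \<subseteq> carrier G \<Longrightarrow> wprod G xs \<in> carrier G"
  by (induction xs) auto

lemma wprod_append:
  "set xs \<subseteq> carrier G \<Longrightarrow> set ys \<subseteq> carrier G \<Longrightarrow> wprod G (xs @ ys) = wprod G xs \<otimes> wprod G ys"
  by (induction xs) (auto simp: m_assoc wprod_closed)

lemma wprod_replicate: "x \<in> carrier G \<Longrightarrow> wprod G (replicate n x) = x [^] n"
  by (induction n) (auto, metis nat_pow_Suc nat_pow_Suc2)

lemma prods_len_closed: "S \<subseteq> carrier G \<Longrightarrow> x \<in> prods_len G S n \<Longrightarrow> x \<in> carrier G"
  unfolding prods_len_def by (auto intro: wprod_closed)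

lemma prods_len_0 [simp]: "prods_len G S 0 = {\<one>}"
  unfolding prods_len_def by auto

lemma prods_len_mult:
  assumes "S \<subseteq> carrier G" "x \<in> prods_len G S a" "y \<in> prods_len G S b"
  shows "x \<otimes> y \<in> prods_len G S (a + b)"
proof -
  obtain xs ys where "x = wprod G xs" "length xs = a" "set xs \<subseteq> S"
    and "y = wprod G ys" "length ys = b" "set ys \<subseteq> S"
    using assms(2,3) unfolding prods_len_def by blast
  with assms(1) show ?thesis
    unfolding prods_len_def by (intro CollectI exI[of _ "xs @ ys"]) (auto simp: wprod_append)
qed

lemma prods_len_pad:
  assumes "S \<subseteq> carrier G" "\<one> \<in> prods_len G S p" "x \<in> prods_len G S a"
  shows "x \<in> prods_len G S (a + t * p)"
proof (induction t)
  case (Suc t)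
  then have "x \<otimes> \<one> \<in> prods_len G S (a + t * p + p)"
    using assms by (intro prods_len_mult) auto
  then show ?case
    using prods_len_closed[OF assms(1,3)] by (simp add: algebra_simps)
qed (use assms in simp)

lemma nat_pow_in_prods_len: "S \<subseteq> carrier G \<Longrightarrow> x \<in> S \<Longrightarrow> x [^] n \<in> prods_len G S n"
  unfolding prods_len_def by (intro CollectI exI[of _ "replicate n x"]) (auto simp: wprod_replicate)

lemma mem_prods_len_1: "x \<in> S \<Longrightarrow> x \<in> carrier G \<Longrightarrow> x \<in> prods_len G S 1"
  unfolding prods_len_def by (intro CollectI exI[of _ "[x]"]) simp

lemma mem_W_iff: "x \<in> W G S \<longleftrightarrow> (\<exists>n>0. x \<in> prods_len G S n)"
  unfolding W_def prods_len_def by auto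

end

context group
begin

lemma m_inv_cancel_left [simp]: "x \<in> carrier G \<Longrightarrow> y \<in> carrier G \<Longrightarrow> x \<otimes> (inv x \<otimes> y) = y"
  by (simp add: m_assoc[symmetric])

lemma inv_m_cancel_left [simp]: "x \<in> carrier G \<Longrightarrow> y \<in> carrier G \<Longrightarrow> inv x \<otimes> (x \<otimes> y) = y"
  by (simp add: m_assoc[symmetric])

lemma prods_len_subset_W: "subgroup (W G S) G \<Longrightarrow> prods_len G S n \<subseteq> W G S"
proof (cases n)
  case 0
  then show "subgroup (W G S) G \<Longrightarrow> ?thesis" using subgroup.one_closed by auto
qed (use mem_W_iff in blast)

lemma one_in_prods_len: "subgroup (W G S) G \<Longrightarrow> \<exists>p>0. \<one> \<in> prods_len G S p"
  using mem_W_iff subgroup.one_closed by metis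

lemma prods_len_pad_one:
  assumes "S \<subseteq> carrier G" "subgroup (W G S) G" "x \<in> prods_len G S n"
  shows "\<exists>p>0. \<forall>t. x \<in> prods_len G S (n + t * p)"
proof -
  obtain p where "p > 0" "\<one> \<in> prods_len G S p"
    using one_in_prods_len[OF assms(2)] by blast
  then show ?thesis
    using prods_len_pad[OF assms(1) _ assms(3)] by blast
qed

lemma prods_len_inv:
  assumes S: "S \<subseteq> carrier G" "subgroup (W G S) G" and x: "x \<in> prods_len G S n"
  shows "\<exists>A>n. \<forall>t>0. inv x \<in> prods_len G S (t * A - n)"
proof -
  have "inv x \<in> W G S"
    using x prods_len_subset_W[OF S(2)] subgroup.m_inv_closed[OF S(2)] by blast
  then obtain m where m: "m > 0" "inv x \<in> prods_len G S m"
    unfolding mem_W_iff by blast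
  have "x \<otimes> inv x \<in> prods_len G S (n + m)"
    using S x m by (intro prods_len_mult) auto
  then have one: "\<one> \<in> prods_len G S (n + m)"
    using prods_len_closed[OF S(1) x] by simp
  have "inv x \<in> prods_len G S (t * (n + m) - n)" if "t > 0" for t
  proof -
    obtain u where "t = Suc u" using \<open>t > 0\<close> by (cases t) auto
    then have "t * (n + m) - n = m + u * (n + m)" by simp
    then show ?thesis using prods_len_pad[OF S(1) one m(2)] by simp
  qed
  then show ?thesis using m(1) by (intro exI[of _ "n + m"]) auto
qed

lemma conj_in_prods_len:
  assumes "S \<subseteq> carrier G" "subgroup (W G S) G" "c \<in> W G S" "x \<in> prods_len G S n"
  shows "\<exists>A>0. \<forall>t>0. c \<otimes> x \<otimes> inv c \<in> prods_len G S (n + t * A)"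
proof -
  obtain a where a: "c \<in> prods_len G S a"
    using assms(3) unfolding mem_W_iff by blast
  obtain A where A: "A > a" "\<And>t. t > 0 \<Longrightarrow> inv c \<in> prods_len G S (t * A - a)"
    using prods_len_inv[OF assms(1,2) a] by blast
  have "c \<otimes> x \<otimes> inv c \<in> prods_len G S (n + t * A)" if "t > 0" for t
  proof -
    have "A \<le> t * A" using that by simp
    then have "a \<le> t * A" using A(1) by linarith
    then have "a + n + (t * A - a) = n + t * A" by simp
    then show ?thesis
      using prods_len_mult[OF assms(1) prods_len_mult[OF assms(1) a assms(4)] A(2)[OF that]] by simp
  qed
  then show ?thesis using A(1) by (intro exI[of _ A]) auto
qed

lemma generate_eq_W: "S \<subseteq> carrier G \<Longrightarrow> subgroup (W G S) G \<Longrightarrow> generate G S = W G S"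
proof
  assume S: "S \<subseteq> carrier G" "subgroup (W G S) G"
  have "l \<in> W G S" if "l \<in> S" for l
    using that S(1) mem_prods_len_1[of l S] unfolding mem_W_iff by blast
  then have "S \<subseteq> W G S" by blast
  then show "generate G S \<subseteq> W G S"
    using S generate_subgroup_incl by blast
  have "set xs \<subseteq> S \<Longrightarrow> wprod G xs \<in> generate G S" for xs
    by (induction xs) (auto intro: generate.one generate.incl generate.eng)
  then show "W G S \<subseteq> generate G S"
    unfolding W_def by auto
qed

lemma inv_wprod_in_prods_len:
  "S \<subseteq> carrier G \<Longrightarrow> set xs \<subseteq> (\<lambda>l. inv l) ` S \<Longrightarrow> inv (wprod G xs) \<in> prods_len G S (length xs)"
proof (induction xs)
  case (Cons x xs)
  then obtain l where l: "l \<in> S" "x = inv l" by auto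
  then have "inv (wprod G xs) \<otimes> l \<in> prods_len G S (length xs + 1)"
    using Cons mem_prods_len_1[of l S] by (intro prods_len_mult) auto
  moreover have "wprod G xs \<in> carrier G"
    using Cons by (force intro: wprod_closed)
  ultimately show ?case
    using Cons l by (auto simp: inv_mult_group)
qed simp

lemma normaliser_conj:
  assumes "S \<subseteq> carrier G" "c \<in> normaliser G S" "x \<in> S"
  shows "inv c \<otimes> x \<otimes> c \<in> S" "c \<otimes> x \<otimes> inv c \<in> S"
proof -
  have N: "(\<lambda>l. inv c \<otimes> l \<otimes> c) ` S = S" "c \<in> carrier G"
    using assms(2) unfolding normaliser_def by auto
  then show "inv c \<otimes> x \<otimes> c \<in> S" using assms(3) by blast
  obtain l where "l \<in> S" "x = inv c \<otimes> l \<otimes> c" using N assms(3) by blast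
  moreover have "l \<in> carrier G" using \<open>l \<in> S\<close> assms(1) by blast
  ultimately show "c \<otimes> x \<otimes> inv c \<in> S" using N(2) by (simp add: m_assoc)
qed

lemma normaliser_mult:
  assumes S: "S \<subseteq> carrier G" and c: "c \<in> normaliser G S" and d: "d \<in> normaliser G S"
  shows "c \<otimes> d \<in> normaliser G S"
proof -
  have cd: "c \<in> carrier G" "d \<in> carrier G"
    using c d unfolding normaliser_def by auto
  have "inv (c \<otimes> d) \<otimes> l \<otimes> (c \<otimes> d) = inv d \<otimes> (inv c \<otimes> l \<otimes> c) \<otimes> d" if "l \<in> S" for l
    using that S cd by (simp add: subsetD m_assoc inv_mult_group)
  then have "(\<lambda>l. inv (c \<otimes> d) \<otimes> l \<otimes> (c \<otimes> d)) ` S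
      = (\<lambda>l. inv d \<otimes> l \<otimes> d) ` (\<lambda>l. inv c \<otimes> l \<otimes> c) ` S"
    unfolding image_image by (rule image_cong[OF refl])
  then show ?thesis
    using c d cd unfolding normaliser_def by auto
qed

lemma nat_pow_in_normaliser:
  assumes "S \<subseteq> carrier G" "c \<in> normaliser G S"
  shows "c [^] (n::nat) \<in> normaliser G S"
proof (induction n)
  case 0
  have "(\<lambda>l. inv \<one> \<otimes> l \<otimes> \<one>) ` S = S"
    using assms(1) by (force simp: image_def)
  then show ?case unfolding normaliser_def by simp
next
  case (Suc n)
  then show ?case using normaliser_mult[OF assms(1) Suc assms(2)] by simp
qed

end

definition min_period :: "(nat \<Rightarrow> 'b) \<Rightarrow> nat" where
  "min_period f = (LEAST p. p > 0 \<and> f p = f 0)"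

context
  fixes f :: "nat \<Rightarrow> 'b"
  assumes shift: "\<And>j n n'. f n = f n' \<Longrightarrow> f (j + n) = f (j + n')"
    and periodic: "\<exists>p>0. f p = f 0"
begin

lemma min_period: "min_period f > 0" "f (min_period f) = f 0"
  using LeastI_ex[OF periodic] unfolding min_period_def by auto

lemma min_period_le: "p > 0 \<Longrightarrow> f p = f 0 \<Longrightarrow> min_period f \<le> p"
  unfolding min_period_def by (rule Least_le) simp

lemma eq_mod_min_period: "f n = f (n mod min_period f)"
proof (induction n rule: less_induct)
  case (less n)
  show ?case
  proof (cases "n < min_period f")
    case False
    then have "f n = f ((n - min_period f) + 0)"
      using shift[OF min_period(2), of "n - min_period f"] by simp
    also have "\<dots> = f (n mod min_period f)"
      using less[of "n - min_period f"] False min_period(1) by (simp add: le_mod_geq)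
    finally show ?thesis .
  qed simp
qed

lemma inj_on_min_period: "inj_on f {..<min_period f}"
proof -
  have False if ij: "i < j" "j < min_period f" and e: "f i = f j" for i j
  proof -
    \<comment> \<open>shift by \<open>(k - 1) i\<close>, which turns \<open>i\<close> into a multiple \<open>k i\<close> of the period \<open>k\<close>\<close>
    let ?k = "min_period f"
    have "f (?k * i) = f (?k * i + (j - i))"
      using shift[OF e, of "(?k - 1) * i"] ij min_period(1) by (simp add: algebra_simps)
    moreover have "(?k * i + (j - i)) mod ?k = j - i"
      using ij by (metis mod_mult_self4 mod_less less_imp_diff_less)
    ultimately have "f (j - i) = f 0"
      using eq_mod_min_period[of "?k * i"] eq_mod_min_period[of "?k * i + (j - i)"] by simp
    then show False
      using min_period_le[of "j - i"] ij by simp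
  qed
  then show ?thesis
    by (metis inj_onI linorder_neqE_nat lessThan_iff)
qed

lemma range_eq_min_period: "range f = f ` {..<min_period f}"
proof -
  have "f n \<in> f ` {..<min_period f}" for n
    using eq_mod_min_period[of n] min_period(1) by (metis image_eqI lessThan_iff mod_less_divisor)
  then show ?thesis by blast
qed

lemma card_range_eq_min_period: "finite (range f)" "card (range f) = min_period f"
  using range_eq_min_period card_image[OF inj_on_min_period] by auto

end

lemma sub_digraph_iso_image:
  assumes "inj_on F C" and "\<And>g h. g \<in> C \<Longrightarrow> h \<in> C \<Longrightarrow> arc2S G L R (F g) (F h) \<longleftrightarrow> arc2S G L R g h"
  shows "sub_digraph_iso G L R C (F ` C)"
  unfolding sub_digraph_iso_def using assms by (metis inj_on_imp_bij_betw)

locale two_sided_digraph = group G for G (structure) +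
  fixes L R :: "'a set"
  assumes L_carrier: "L \<subseteq> carrier G" and L_nonempty: "L \<noteq> {}"
    and R_carrier: "R \<subseteq> carrier G" and R_nonempty: "R \<noteq> {}"
    and W_L_subgroup: "subgroup (W G L) G" and W_R_subgroup: "subgroup (W G R) G"
begin

definition balanced :: "'a \<Rightarrow> 'a \<Rightarrow> bool" where
  "balanced x y \<longleftrightarrow> (\<exists>n. x \<in> prods_len G L n \<and> y \<in> prods_len G R n)"

definition reach :: "'a \<Rightarrow> 'a \<Rightarrow> bool" where
  "reach g h \<longleftrightarrow> g \<in> carrier G \<and> (\<exists>x y. balanced x y \<and> h = inv x \<otimes> g \<otimes> y)"

lemma balanced_closed: "balanced x y \<Longrightarrow> x \<in> carrier G \<and> y \<in> carrier G"
  unfolding balanced_def using prods_len_closed[OF L_carrier] prods_len_closed[OF R_carrier] by auto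

lemma balanced_one: "balanced \<one> \<one>"
  unfolding balanced_def by (intro exI[of _ 0]) simp

lemma balanced_mult: "balanced x y \<Longrightarrow> balanced x' y' \<Longrightarrow> balanced (x \<otimes> x') (y \<otimes> y')"
  unfolding balanced_def using prods_len_mult[OF L_carrier] prods_len_mult[OF R_carrier] by meson

lemma balanced_inv:
  assumes "balanced x y"
  shows "balanced (inv x) (inv y)"
proof -
  obtain n where n: "x \<in> prods_len G L n" "y \<in> prods_len G R n"
    using assms unfolding balanced_def by blast
  obtain A where A: "A > n" "\<And>t. t > 0 \<Longrightarrow> inv x \<in> prods_len G L (t * A - n)"
    using prods_len_inv[OF L_carrier W_L_subgroup n(1)] by blast
  obtain B where B: "B > n" "\<And>t. t > 0 \<Longrightarrow> inv y \<in> prods_len G R (t * B - n)"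
    using prods_len_inv[OF R_carrier W_R_subgroup n(2)] by blast
  have "inv x \<in> prods_len G L (B * A - n)" "inv y \<in> prods_len G R (B * A - n)"
    using A(2)[of B] B(2)[of A] A(1) B(1) by (simp_all add: mult.commute)
  then show ?thesis
    unfolding balanced_def by blast
qed

lemma balanced_conj_left:
  assumes c: "c \<in> W G L" and xy: "balanced x y"
  shows "balanced (c \<otimes> x \<otimes> inv c) y"
proof -
  obtain n where n: "x \<in> prods_len G L n" "y \<in> prods_len G R n"
    using xy unfolding balanced_def by blast
  obtain A where A: "A > 0" "\<And>t. t > 0 \<Longrightarrow> c \<otimes> x \<otimes> inv c \<in> prods_len G L (n + t * A)"
    using conj_in_prods_len[OF L_carrier W_L_subgroup c n(1)] by blast
  obtain B where B: "B > 0" "\<And>t. y \<in> prods_len G R (n + t * B)"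
    using prods_len_pad_one[OF R_carrier W_R_subgroup n(2)] by blast
  have "c \<otimes> x \<otimes> inv c \<in> prods_len G L (n + B * A)" "y \<in> prods_len G R (n + B * A)"
    using A(2)[OF B(1)] B(2)[of A] by (simp_all add: mult.commute)
  then show ?thesis
    unfolding balanced_def by blast
qed

lemma balanced_conj_right:
  assumes c: "c \<in> W G R" and xy: "balanced x y"
  shows "balanced x (inv c \<otimes> y \<otimes> c)"
proof -
  obtain n where n: "x \<in> prods_len G L n" "y \<in> prods_len G R n"
    using xy unfolding balanced_def by blast
  have icW: "inv c \<in> W G R" and cC: "c \<in> carrier G"
    using c subgroup.m_inv_closed[OF W_R_subgroup] subgroup.mem_carrier[OF W_R_subgroup] by auto
  obtain A where A: "A > 0" "\<And>t. t > 0 \<Longrightarrow> inv c \<otimes> y \<otimes> inv (inv c) \<in> prods_len G R (n + t * A)"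
    using conj_in_prods_len[OF R_carrier W_R_subgroup icW n(2)] by blast
  obtain B where B: "B > 0" "\<And>t. x \<in> prods_len G L (n + t * B)"
    using prods_len_pad_one[OF L_carrier W_L_subgroup n(1)] by blast
  have "x \<in> prods_len G L (n + B * A)" "inv c \<otimes> y \<otimes> c \<in> prods_len G R (n + B * A)"
    using A(2)[OF B(1)] B(2)[of A] cC by (simp_all add: mult.commute)
  then show ?thesis
    unfolding balanced_def by blast
qed

lemma reach_closed: "reach g h \<Longrightarrow> h \<in> carrier G"
  unfolding reach_def using balanced_closed by auto

lemma reach_refl: "g \<in> carrier G \<Longrightarrow> reach g g"
  unfolding reach_def using balanced_one by (intro conjI exI[of _ \<one>]) auto

lemma reach_sym:
  assumes "reach g h"
  shows "reach h g"
proof -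
  obtain x y where g: "g \<in> carrier G" and xy: "balanced x y" and h: "h = inv x \<otimes> g \<otimes> y"
    using assms unfolding reach_def by blast
  have "x \<in> carrier G" "y \<in> carrier G" using balanced_closed[OF xy] by auto
  then have "h \<in> carrier G" "g = inv (inv x) \<otimes> h \<otimes> inv y"
    using g by (simp_all add: h m_assoc)
  then show ?thesis
    unfolding reach_def using balanced_inv[OF xy] by blast
qed

lemma reach_trans:
  assumes "reach g h" "reach h k"
  shows "reach g k"
proof -
  obtain x y x' y' where g: "g \<in> carrier G" and xy: "balanced x y" "balanced x' y'"
    and h: "h = inv x \<otimes> g \<otimes> y" and k: "k = inv x' \<otimes> h \<otimes> y'"
    using assms unfolding reach_def by blast
  have "x \<in> carrier G" "y \<in> carrier G" "x' \<in> carrier G" "y' \<in> carrier G"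
    using balanced_closed xy by auto
  then have "k = inv (x \<otimes> x') \<otimes> g \<otimes> (y \<otimes> y')"
    using g by (simp add: h k m_assoc inv_mult_group)
  then show ?thesis
    unfolding reach_def using g balanced_mult[OF xy] by blast
qed

lemma reach_balanced:
  assumes xy: "balanced x y" and g: "g \<in> carrier G"
  shows "reach (x \<otimes> g) (g \<otimes> y)"
proof -
  have "x \<in> carrier G" "y \<in> carrier G" using balanced_closed[OF xy] by auto
  then have "x \<otimes> g \<in> carrier G" "g \<otimes> y = inv x \<otimes> (x \<otimes> g) \<otimes> y"
    using g by (simp_all add: m_assoc)
  then show ?thesis
    unfolding reach_def using xy by blast
qed

lemma reach_lmult:
  assumes c: "c \<in> W G L" and "reach g h"
  shows "reach (c \<otimes> g) (c \<otimes> h)"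
proof -
  obtain x y where g: "g \<in> carrier G" and xy: "balanced x y" and h: "h = inv x \<otimes> g \<otimes> y"
    using assms(2) unfolding reach_def by blast
  have "c \<in> carrier G" "x \<in> carrier G" "y \<in> carrier G"
    using subgroup.mem_carrier[OF W_L_subgroup c] balanced_closed[OF xy] by auto
  then have "c \<otimes> g \<in> carrier G" "c \<otimes> h = inv (c \<otimes> x \<otimes> inv c) \<otimes> (c \<otimes> g) \<otimes> y"
    using g by (simp_all add: h m_assoc inv_mult_group)
  then show ?thesis
    unfolding reach_def using balanced_conj_left[OF c xy] by blast
qed

lemma reach_rmult:
  assumes c: "c \<in> W G R" and "reach g h"
  shows "reach (g \<otimes> c) (h \<otimes> c)"
proof -
  obtain x y where g: "g \<in> carrier G" and xy: "balanced x y" and h: "h = inv x \<otimes> g \<otimes> y"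
    using assms(2) unfolding reach_def by blast
  have "c \<in> carrier G" "x \<in> carrier G" "y \<in> carrier G"
    using subgroup.mem_carrier[OF W_R_subgroup c] balanced_closed[OF xy] by auto
  then have "g \<otimes> c \<in> carrier G" "h \<otimes> c = inv x \<otimes> (g \<otimes> c) \<otimes> (inv c \<otimes> y \<otimes> c)"
    using g by (simp_all add: h m_assoc)
  then show ?thesis
    unfolding reach_def using balanced_conj_right[OF c xy] by blast
qed

lemma arc_imp_reach: "arc2S G L R g h \<Longrightarrow> reach g h"
proof -
  assume "arc2S G L R g h"
  then obtain l r where g: "g \<in> carrier G" and lr: "l \<in> L" "r \<in> R" and h: "h = inv l \<otimes> g \<otimes> r"
    unfolding arc2S_def by blast
  have "balanced l r"
    unfolding balanced_def using lr L_carrier R_carrier mem_prods_len_1 by (meson subsetD)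
  then show ?thesis
    unfolding reach_def using g h by blast
qed

lemma path_words:
  "length xs = length ys \<Longrightarrow> set xs \<subseteq> L \<Longrightarrow> set ys \<subseteq> R \<Longrightarrow> g \<in> carrier G \<Longrightarrow>
   path2S G L R g (inv (wprod G xs) \<otimes> g \<otimes> wprod G ys)"
proof (induction xs arbitrary: ys g)
  case Nil
  then show ?case by (simp add: path2S_def)
next
  case (Cons l xs)
  then obtain r ys' where ys: "ys = r # ys'" by (cases ys) auto
  have l: "l \<in> carrier G" and r: "r \<in> carrier G"
    using Cons ys L_carrier R_carrier by auto
  have wx: "wprod G xs \<in> carrier G" and wy: "wprod G ys' \<in> carrier G"
    using Cons ys L_carrier R_carrier by (auto intro!: wprod_closed)
  let ?g = "inv l \<otimes> g \<otimes> r"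
  have "arc2S G L R g ?g"
    unfolding arc2S_def using Cons ys l r by auto
  moreover have "path2S G L R ?g (inv (wprod G xs) \<otimes> ?g \<otimes> wprod G ys')"
    using Cons ys l r by auto
  moreover have "inv (wprod G xs) \<otimes> ?g \<otimes> wprod G ys' = inv (wprod G (l # xs)) \<otimes> g \<otimes> wprod G ys"
    using l r wx wy Cons by (simp add: ys m_assoc inv_mult_group)
  ultimately show ?case
    unfolding path2S_def by (metis converse_rtranclp_into_rtranclp)
qed

lemma path2S_iff_reach: "g \<in> carrier G \<Longrightarrow> path2S G L R g h \<longleftrightarrow> reach g h"
proof
  assume g: "g \<in> carrier G" and "path2S G L R g h"
  then have "(arc2S G L R)\<^sup>*\<^sup>* g h" unfolding path2S_def by simp
  then show "reach g h"
  proof (induction rule: rtranclp_induct)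
    case base
    show ?case using reach_refl[OF g] .
  next
    case (step h k)
    then show ?case using arc_imp_reach reach_trans by blast
  qed
next
  assume "reach g h"
  then obtain x y n where g: "g \<in> carrier G" and h: "h = inv x \<otimes> g \<otimes> y"
    and n: "x \<in> prods_len G L n" "y \<in> prods_len G R n"
    unfolding reach_def balanced_def by blast
  then obtain xs ys where "x = wprod G xs" "y = wprod G ys" "length xs = length ys"
    "set xs \<subseteq> L" "set ys \<subseteq> R"
    unfolding prods_len_def by auto
  then show "path2S G L R g h" using path_words g h by simp
qed

lemma strongly_conn_iff_reach:
  assumes g: "g \<in> carrier G"
  shows "strongly_conn G L R g h \<longleftrightarrow> reach g h"
proof
  assume "reach g h"
  then have "reach h g" "h \<in> carrier G" using reach_sym reach_closed by auto
  with \<open>reach g h\<close> show "strongly_conn G L R g h"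
    unfolding strongly_conn_def using path2S_iff_reach g by simp
qed (use g path2S_iff_reach in \<open>simp add: strongly_conn_def\<close>)

definition scc :: "'a \<Rightarrow> 'a set" where
  "scc g = {h \<in> carrier G. strongly_conn G L R g h}"

lemma SCCs_eq: "SCCs G L R = scc ` carrier G"
  unfolding SCCs_def scc_def by auto

lemma scc_eq: "g \<in> carrier G \<Longrightarrow> scc g = Collect (reach g)"
  unfolding scc_def using strongly_conn_iff_reach reach_closed by auto

lemma mem_scc_self: "g \<in> carrier G \<Longrightarrow> g \<in> scc g"
  using scc_eq reach_refl by simp

lemma scc_subset_carrier: "scc g \<subseteq> carrier G"
  unfolding scc_def by blast

lemma scc_eq_iff:
  assumes g: "g \<in> carrier G" and h: "h \<in> carrier G"
  shows "scc g = scc h \<longleftrightarrow> reach g h"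
proof
  assume "scc g = scc h"
  then show "reach g h" using mem_scc_self[OF h] scc_eq[OF g] by auto
next
  assume "reach g h"
  then show "scc g = scc h"
    unfolding scc_eq[OF g] scc_eq[OF h] using reach_sym reach_trans by blast
qed

lemma scc_lmult:
  assumes c: "c \<in> W G L" and g: "g \<in> carrier G"
  shows "scc (c \<otimes> g) = (\<lambda>h. c \<otimes> h) ` scc g"
proof -
  have cC: "c \<in> carrier G" and icW: "inv c \<in> W G L"
    using c subgroup.mem_carrier[OF W_L_subgroup] subgroup.m_inv_closed[OF W_L_subgroup] by auto
  have "h \<in> (\<lambda>h. c \<otimes> h) ` Collect (reach g)" if "reach (c \<otimes> g) h" for h
  proof -
    have "reach g (inv c \<otimes> h)"
      using reach_lmult[OF icW that] cC g by simp
    moreover have "h = c \<otimes> (inv c \<otimes> h)"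
      using reach_closed[OF that] cC by simp
    ultimately show ?thesis by blast
  qed
  then show ?thesis
    using scc_eq g cC reach_lmult[OF c] by auto
qed

lemma scc_rmult:
  assumes c: "c \<in> W G R" and g: "g \<in> carrier G"
  shows "scc (g \<otimes> c) = (\<lambda>h. h \<otimes> c) ` scc g"
proof -
  have cC: "c \<in> carrier G" and icW: "inv c \<in> W G R"
    using c subgroup.mem_carrier[OF W_R_subgroup] subgroup.m_inv_closed[OF W_R_subgroup] by auto
  have "h \<in> (\<lambda>h. h \<otimes> c) ` Collect (reach g)" if "reach (g \<otimes> c) h" for h
  proof -
    have "reach g (h \<otimes> inv c)"
      using reach_rmult[OF icW that] cC g by (simp add: m_assoc)
    moreover have "h = (h \<otimes> inv c) \<otimes> c"
      using reach_closed[OF that] cC by (simp add: m_assoc)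
    ultimately show ?thesis by blast
  qed
  then show ?thesis
    using scc_eq g cC reach_rmult[OF c] by auto
qed

lemma arc_lmult_iff:
  assumes c: "c \<in> normaliser G L" and g: "g \<in> carrier G" and h: "h \<in> carrier G"
  shows "arc2S G L R (c \<otimes> g) (c \<otimes> h) \<longleftrightarrow> arc2S G L R g h"
proof -
  have cC: "c \<in> carrier G" using c unfolding normaliser_def by blast
  have eq: "c \<otimes> h = inv l \<otimes> (c \<otimes> g) \<otimes> r \<longleftrightarrow> h = inv (inv c \<otimes> l \<otimes> c) \<otimes> g \<otimes> r"
    if "l \<in> carrier G" "r \<in> carrier G" for l r
  proof -
    have "inv (inv c \<otimes> l \<otimes> c) \<otimes> g \<otimes> r = inv c \<otimes> (inv l \<otimes> (c \<otimes> g) \<otimes> r)"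
      using that cC g by (simp add: m_assoc inv_mult_group)
    then show ?thesis
      using inv_solve_left[OF h cC, of "inv l \<otimes> (c \<otimes> g) \<otimes> r"] that cC g by auto
  qed
  show ?thesis
  proof
    assume "arc2S G L R (c \<otimes> g) (c \<otimes> h)"
    then obtain l r where l: "l \<in> L" and r: "r \<in> R" and hlr: "c \<otimes> h = inv l \<otimes> (c \<otimes> g) \<otimes> r"
      unfolding arc2S_def by blast
    have "h = inv (inv c \<otimes> l \<otimes> c) \<otimes> g \<otimes> r"
      using eq hlr l r L_carrier R_carrier by blast
    moreover have "inv c \<otimes> l \<otimes> c \<in> L"
      using normaliser_conj(1)[OF L_carrier c l] .
    ultimately show "arc2S G L R g h"
      unfolding arc2S_def using g h r by blast
  next
    assume "arc2S G L R g h"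
    then obtain l r where l: "l \<in> L" and r: "r \<in> R" and hlr: "h = inv l \<otimes> g \<otimes> r"
      unfolding arc2S_def by blast
    have lC: "l \<in> carrier G" and rC: "r \<in> carrier G"
      using l r L_carrier R_carrier by auto
    have "inv c \<otimes> (c \<otimes> l \<otimes> inv c) \<otimes> c = l"
      using cC lC by (simp add: m_assoc)
    then have "c \<otimes> h = inv (c \<otimes> l \<otimes> inv c) \<otimes> (c \<otimes> g) \<otimes> r"
      using eq[of "c \<otimes> l \<otimes> inv c" r] hlr cC lC rC by simp
    moreover have "c \<otimes> l \<otimes> inv c \<in> L"
      using normaliser_conj(2)[OF L_carrier c l] .
    moreover have "c \<otimes> g \<in> carrier G" "c \<otimes> h \<in> carrier G"
      using cC g h by auto
    ultimately show "arc2S G L R (c \<otimes> g) (c \<otimes> h)"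
      unfolding arc2S_def using r by blast
  qed
qed

lemma arc_rmult_iff:
  assumes c: "c \<in> normaliser G R" and g: "g \<in> carrier G" and h: "h \<in> carrier G"
  shows "arc2S G L R (g \<otimes> c) (h \<otimes> c) \<longleftrightarrow> arc2S G L R g h"
proof -
  have cC: "c \<in> carrier G" using c unfolding normaliser_def by blast
  have eq: "h \<otimes> c = inv l \<otimes> (g \<otimes> c) \<otimes> r \<longleftrightarrow> h = inv l \<otimes> g \<otimes> (c \<otimes> r \<otimes> inv c)"
    if "l \<in> carrier G" "r \<in> carrier G" for l r
  proof -
    have "inv l \<otimes> g \<otimes> (c \<otimes> r \<otimes> inv c) = inv l \<otimes> (g \<otimes> c) \<otimes> r \<otimes> inv c"
      using that cC g by (simp add: m_assoc)
    then show ?thesis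
      using inv_solve_right[OF h _ cC, of "inv l \<otimes> (g \<otimes> c) \<otimes> r"] that cC g by auto
  qed
  show ?thesis
  proof
    assume "arc2S G L R (g \<otimes> c) (h \<otimes> c)"
    then obtain l r where l: "l \<in> L" and r: "r \<in> R" and hlr: "h \<otimes> c = inv l \<otimes> (g \<otimes> c) \<otimes> r"
      unfolding arc2S_def by blast
    have "h = inv l \<otimes> g \<otimes> (c \<otimes> r \<otimes> inv c)"
      using eq hlr l r L_carrier R_carrier by blast
    moreover have "c \<otimes> r \<otimes> inv c \<in> R"
      using normaliser_conj(2)[OF R_carrier c r] .
    ultimately show "arc2S G L R g h"
      unfolding arc2S_def using g h l by blast
  next
    assume "arc2S G L R g h"
    then obtain l r where l: "l \<in> L" and r: "r \<in> R" and hlr: "h = inv l \<otimes> g \<otimes> r"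
      unfolding arc2S_def by blast
    have lC: "l \<in> carrier G" and rC: "r \<in> carrier G"
      using l r L_carrier R_carrier by auto
    have "c \<otimes> (inv c \<otimes> r \<otimes> c) \<otimes> inv c = r"
      using cC rC by (simp add: m_assoc)
    then have "h \<otimes> c = inv l \<otimes> (g \<otimes> c) \<otimes> (inv c \<otimes> r \<otimes> c)"
      using eq[of l "inv c \<otimes> r \<otimes> c"] hlr cC lC rC by simp
    moreover have "inv c \<otimes> r \<otimes> c \<in> R"
      using normaliser_conj(1)[OF R_carrier c r] .
    moreover have "g \<otimes> c \<in> carrier G" "h \<otimes> c \<in> carrier G"
      using cC g h by auto
    ultimately show "arc2S G L R (g \<otimes> c) (h \<otimes> c)"
      unfolding arc2S_def using l by blast
  qed
qed

end

locale two_sided_double_coset = two_sided_digraph +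
  fixes s assumes s_carrier: "s \<in> carrier G"
begin

definition l\<^sub>0 :: 'a where "l\<^sub>0 = (SOME l. l \<in> L)"

definition r\<^sub>0 :: 'a where "r\<^sub>0 = (SOME r. r \<in> R)"

lemma l\<^sub>0: "l\<^sub>0 \<in> L" "l\<^sub>0 \<in> carrier G"
  unfolding l\<^sub>0_def using L_nonempty L_carrier some_in_eq by blast+

lemma r\<^sub>0: "r\<^sub>0 \<in> R"
  unfolding r\<^sub>0_def using R_nonempty some_in_eq by blast

definition scc_pow :: "nat \<Rightarrow> 'a set" where
  "scc_pow n = scc (l\<^sub>0 [^] n \<otimes> s)"

lemma scc_pow_0: "scc_pow 0 = scc s"
  using s_carrier by (simp add: scc_pow_def)

lemma scc_prods_len_mult: "w \<in> prods_len G L n \<Longrightarrow> scc (w \<otimes> s) = scc_pow n"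
proof -
  assume w: "w \<in> prods_len G L n"
  have wC: "w \<otimes> s \<in> carrier G" "l\<^sub>0 [^] n \<otimes> s \<in> carrier G"
    using prods_len_closed[OF L_carrier w] l\<^sub>0(2) s_carrier by auto
  have "balanced w (r\<^sub>0 [^] n)" "balanced (l\<^sub>0 [^] n) (r\<^sub>0 [^] n)"
    unfolding balanced_def
    using w nat_pow_in_prods_len[OF L_carrier l\<^sub>0(1)] nat_pow_in_prods_len[OF R_carrier r\<^sub>0] by blast+
  then have "reach (w \<otimes> s) (s \<otimes> r\<^sub>0 [^] n)" "reach (l\<^sub>0 [^] n \<otimes> s) (s \<otimes> r\<^sub>0 [^] n)"
    using reach_balanced s_carrier by auto
  then have "reach (w \<otimes> s) (l\<^sub>0 [^] n \<otimes> s)"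
    using reach_sym reach_trans by blast
  then show ?thesis
    unfolding scc_pow_def using scc_eq_iff wC by blast
qed

lemma scc_pow_add: "scc_pow (j + n) = (\<lambda>h. l\<^sub>0 [^] j \<otimes> h) ` scc_pow n"
proof -
  have "l\<^sub>0 [^] j \<in> W G L"
    using nat_pow_in_prods_len[OF L_carrier l\<^sub>0(1)] prods_len_subset_W[OF W_L_subgroup] by blast
  moreover have "l\<^sub>0 [^] (j + n) \<otimes> s = l\<^sub>0 [^] j \<otimes> (l\<^sub>0 [^] n \<otimes> s)"
    using l\<^sub>0(2) s_carrier by (simp add: nat_pow_mult[symmetric] m_assoc)
  ultimately show ?thesis
    unfolding scc_pow_def using scc_lmult l\<^sub>0(2) s_carrier by simp
qed

lemma scc_pow_shift: "scc_pow n = scc_pow n' \<Longrightarrow> scc_pow (j + n) = scc_pow (j + n')"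
  by (simp add: scc_pow_add)

lemma scc_pow_periodic: "\<exists>p>0. scc_pow p = scc_pow 0"
proof -
  obtain p where "p > 0" "\<one> \<in> prods_len G L p"
    using one_in_prods_len[OF W_L_subgroup] by blast
  then show ?thesis
    using scc_prods_len_mult[of \<one> p] s_carrier by (auto simp: scc_pow_0)
qed

lemmas scc_pow_mod = eq_mod_min_period[of scc_pow, OF scc_pow_shift scc_pow_periodic]
  and scc_pow_min_period = min_period[of scc_pow, OF scc_pow_shift scc_pow_periodic]

lemma double_coset_eq: "double_coset G L s R = {a \<otimes> s \<otimes> b | a b. a \<in> W G L \<and> b \<in> W G R}"
  unfolding double_coset_def
  using generate_eq_W[OF L_carrier W_L_subgroup] generate_eq_W[OF R_carrier W_R_subgroup] by simp

lemma double_coset_subset_carrier: "double_coset G L s R \<subseteq> carrier G"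
  unfolding double_coset_eq
  using subgroup.mem_carrier[OF W_L_subgroup] subgroup.mem_carrier[OF W_R_subgroup] s_carrier by auto

lemma scc_subset_double_coset:
  assumes "g \<in> double_coset G L s R"
  shows "scc g \<subseteq> double_coset G L s R"
proof
  fix h assume "h \<in> scc g"
  obtain a b where a: "a \<in> W G L" and b: "b \<in> W G R" and g: "g = a \<otimes> s \<otimes> b"
    using assms double_coset_eq by blast
  have aC: "a \<in> carrier G" and bC: "b \<in> carrier G"
    using subgroup.mem_carrier[OF W_L_subgroup a] subgroup.mem_carrier[OF W_R_subgroup b] by auto
  then have "reach g h" using \<open>h \<in> scc g\<close> scc_eq g s_carrier by auto
  then obtain x y n where h: "h = inv x \<otimes> g \<otimes> y"
    and n: "x \<in> prods_len G L n" "y \<in> prods_len G R n"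
    unfolding reach_def balanced_def by blast
  have x: "x \<in> W G L" and y: "y \<in> W G R"
    using n prods_len_subset_W[OF W_L_subgroup] prods_len_subset_W[OF W_R_subgroup] by auto
  have "inv x \<otimes> a \<in> W G L" "b \<otimes> y \<in> W G R"
    using x y a b subgroup.m_inv_closed[OF W_L_subgroup] subgroup.m_closed[OF W_L_subgroup]
      subgroup.m_closed[OF W_R_subgroup] by auto
  moreover have "h = (inv x \<otimes> a) \<otimes> s \<otimes> (b \<otimes> y)"
    using aC bC s_carrier subgroup.mem_carrier[OF W_L_subgroup x] subgroup.mem_carrier[OF W_R_subgroup y]
    by (simp add: h g m_assoc)
  ultimately show "h \<in> double_coset G L s R"
    using double_coset_eq by blast
qed

lemma scc_in_double_coset_eq_scc_pow:
  assumes "g \<in> double_coset G L s R"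
  shows "\<exists>n. scc g = scc_pow n"
proof -
  obtain a b where a: "a \<in> W G L" and b: "b \<in> W G R" and g: "g = a \<otimes> s \<otimes> b"
    using assms double_coset_eq by blast
  have aC: "a \<in> carrier G" and bC: "b \<in> carrier G"
    using subgroup.mem_carrier[OF W_L_subgroup a] subgroup.mem_carrier[OF W_R_subgroup b] by auto
  obtain m where m: "b \<in> prods_len G R m"
    using b unfolding mem_W_iff by blast
  have "balanced (l\<^sub>0 [^] m) b"
    unfolding balanced_def using m nat_pow_in_prods_len[OF L_carrier l\<^sub>0(1)] by blast
  then have "reach (l\<^sub>0 [^] m \<otimes> (a \<otimes> s)) g"
    using reach_balanced[of _ b "a \<otimes> s"] aC s_carrier g by simp
  then have "scc ((l\<^sub>0 [^] m \<otimes> a) \<otimes> s) = scc g"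
    using scc_eq_iff reach_closed aC s_carrier l\<^sub>0(2) by (simp add: m_assoc)
  moreover have "l\<^sub>0 [^] m \<otimes> a \<in> W G L"
    using nat_pow_in_prods_len[OF L_carrier l\<^sub>0(1)] prods_len_subset_W[OF W_L_subgroup]
      subgroup.m_closed[OF W_L_subgroup _ a] by blast
  ultimately show ?thesis
    using scc_prods_len_mult unfolding mem_W_iff by metis
qed

lemma scc_pow_subset_double_coset: "scc_pow n \<subseteq> double_coset G L s R"
proof -
  have "l\<^sub>0 [^] n \<in> W G L"
    using nat_pow_in_prods_len[OF L_carrier l\<^sub>0(1)] prods_len_subset_W[OF W_L_subgroup] by blast
  then have "l\<^sub>0 [^] n \<otimes> s \<otimes> \<one> \<in> double_coset G L s R"
    using double_coset_eq subgroup.one_closed[OF W_R_subgroup] by blast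
  then show ?thesis
    unfolding scc_pow_def using scc_subset_double_coset l\<^sub>0(2) s_carrier by simp
qed

lemma SCCs_in_double_coset: "{C \<in> SCCs G L R. C \<subseteq> double_coset G L s R} = range scc_pow"
proof
  show "{C \<in> SCCs G L R. C \<subseteq> double_coset G L s R} \<subseteq> range scc_pow"
    unfolding SCCs_eq using scc_in_double_coset_eq_scc_pow mem_scc_self by blast
  show "range scc_pow \<subseteq> {C \<in> SCCs G L R. C \<subseteq> double_coset G L s R}"
    unfolding SCCs_eq scc_pow_def using scc_pow_subset_double_coset[unfolded scc_pow_def] l\<^sub>0(2) s_carrier
    by auto
qed

lemma double_coset_eq_Union: "double_coset G L s R = \<Union>{C \<in> SCCs G L R. C \<subseteq> double_coset G L s R}"
proof -
  have "g \<in> scc g" "scc g \<in> SCCs G L R" if "g \<in> double_coset G L s R" for g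
    using that double_coset_subset_carrier mem_scc_self SCCs_eq by auto
  then show ?thesis
    using scc_subset_double_coset by blast
qed

lemma scc_pow_eqpoll: "scc_pow n \<approx> scc_pow 0"
proof -
  have "inj_on (\<lambda>h. l\<^sub>0 [^] n \<otimes> h) (scc_pow 0)"
    using inj_on_subset[OF inj_on_cmult[OF nat_pow_closed[OF l\<^sub>0(2)]] scc_subset_carrier]
    unfolding scc_pow_def .
  then show ?thesis
    using scc_pow_add[of n 0] inj_on_image_eqpoll_self by simp
qed

lemma strongly_conn_s_iff: "g \<in> carrier G \<Longrightarrow> strongly_conn G L R g s \<longleftrightarrow> scc g = scc_pow 0"
  using strongly_conn_iff_reach scc_eq_iff s_carrier by (simp add: scc_pow_0)

lemma strongly_conn_word_imp_scc_pow_eq: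
  assumes xs: "set xs \<subseteq> L \<or> set xs \<subseteq> (\<lambda>l. inv l) ` L"
    and sc: "strongly_conn G L R (wprod G xs \<otimes> s) s"
  shows "scc_pow (length xs) = scc_pow 0"
proof -
  have "set xs \<subseteq> carrier G" using xs L_carrier by auto
  then have "scc (wprod G xs \<otimes> s) = scc_pow 0"
    using strongly_conn_s_iff sc wprod_closed s_carrier by simp
  show ?thesis
  proof (cases "set xs \<subseteq> L")
    case True
    then have "wprod G xs \<in> prods_len G L (length xs)"
      unfolding prods_len_def by blast
    then show ?thesis
      using scc_prods_len_mult \<open>scc (wprod G xs \<otimes> s) = scc_pow 0\<close> by simp
  next
    case False
    \<comment> \<open>left multiplication by \<open>w\<^sup>-\<^sup>1\<close> fixes the component of \<open>s\<close>, hence so does that by \<open>w\<close>\<close>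
    define w where "w = inv (wprod G xs)"
    have w: "w \<in> prods_len G L (length xs)"
      unfolding w_def using inv_wprod_in_prods_len[OF L_carrier] xs False by blast
    have wW: "w \<in> W G L" and wC: "w \<in> carrier G"
      using w prods_len_subset_W[OF W_L_subgroup] prods_len_closed[OF L_carrier] by auto
    have "scc (inv w \<otimes> s) = scc s"
      using \<open>scc (wprod G xs \<otimes> s) = scc_pow 0\<close> \<open>set xs \<subseteq> carrier G\<close> wprod_closed
      by (simp add: w_def scc_pow_0)
    have "scc s = (\<lambda>h. w \<otimes> h) ` scc (inv w \<otimes> s)"
      using scc_lmult[OF wW, of "inv w \<otimes> s"] wC s_carrier by simp
    also have "\<dots> = scc (w \<otimes> s)"
      using \<open>scc (inv w \<otimes> s) = scc s\<close> scc_lmult[OF wW s_carrier] by simp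
    finally show ?thesis
      using scc_prods_len_mult[OF w] by (simp add: scc_pow_0)
  qed
qed

lemma min_sc_length_eq: "min_sc_length G L R s = enat (min_period scc_pow)"
  unfolding min_sc_length_def
proof (rule cInf_eq_minimum)
  let ?k = "min_period scc_pow"
  have "strongly_conn G L R (wprod G (replicate ?k l\<^sub>0) \<otimes> s) s"
    using strongly_conn_s_iff scc_pow_min_period(2) l\<^sub>0(2) s_carrier by (simp add: wprod_replicate scc_pow_def)
  then show "enat ?k \<in> {enat (length xs) | xs. xs \<noteq> [] \<and>
      (set xs \<subseteq> L \<or> set xs \<subseteq> (\<lambda>l. inv l) ` L) \<and> strongly_conn G L R (wprod G xs \<otimes> s) s}"
    using scc_pow_min_period(1) l\<^sub>0(1) by (intro CollectI exI[of _ "replicate ?k l\<^sub>0"]) auto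
next
  fix e assume "e \<in> {enat (length xs) | xs. xs \<noteq> [] \<and>
      (set xs \<subseteq> L \<or> set xs \<subseteq> (\<lambda>l. inv l) ` L) \<and> strongly_conn G L R (wprod G xs \<otimes> s) s}"
  then obtain xs where "e = enat (length xs)" "xs \<noteq> []"
    and xs: "set xs \<subseteq> L \<or> set xs \<subseteq> (\<lambda>l. inv l) ` L" "strongly_conn G L R (wprod G xs \<otimes> s) s"
    by auto
  moreover have "scc_pow (length xs) = scc_pow 0"
    using strongly_conn_word_imp_scc_pow_eq[OF xs] .
  ultimately show "enat (min_period scc_pow) \<le> e"
    using min_period_le[of scc_pow, OF scc_pow_shift scc_pow_periodic] by simp
qed

lemma ex_scc_pow_add_eq: "\<exists>j. scc_pow (j + n) = scc_pow m"
proof -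
  obtain k' where k': "min_period scc_pow = Suc k'"
    using scc_pow_min_period(1) gr0_implies_Suc by blast
  have "scc_pow (k' * n + m + n) = scc_pow (min_period scc_pow * n + m)"
    by (simp add: k' algebra_simps)
  then have "scc_pow ((k' * n + m) + n) = scc_pow m"
    using scc_pow_mod[of "min_period scc_pow * n + m"] scc_pow_mod[of m] by simp
  then show ?thesis ..
qed

lemma sub_digraph_iso_scc_pow_add_left:
  assumes c: "c \<in> L" "c \<in> normaliser G L"
  shows "sub_digraph_iso G L R (scc_pow n) (scc_pow (j + n))"
proof -
  let ?d = "c [^] j"
  have d: "?d \<in> prods_len G L j" "?d \<in> normaliser G L"
    using nat_pow_in_prods_len[OF L_carrier c(1)] nat_pow_in_normaliser[OF L_carrier c(2)] by auto
  have dC: "?d \<in> carrier G" and dW: "?d \<in> W G L"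
    using prods_len_closed[OF L_carrier d(1)] prods_len_subset_W[OF W_L_subgroup] d(1) by auto
  have "sub_digraph_iso G L R (scc_pow n) ((\<lambda>h. ?d \<otimes> h) ` scc_pow n)"
    using inj_on_subset[OF inj_on_cmult[OF dC]] arc_lmult_iff[OF d(2)] scc_subset_carrier
    unfolding scc_pow_def by (intro sub_digraph_iso_image) blast+
  moreover have "(\<lambda>h. ?d \<otimes> h) ` scc_pow n = scc_pow (j + n)"
  proof -
    have "(\<lambda>h. ?d \<otimes> h) ` scc_pow n = scc ((?d \<otimes> l\<^sub>0 [^] n) \<otimes> s)"
      unfolding scc_pow_def using scc_lmult[OF dW] dC l\<^sub>0(2) s_carrier by (simp add: m_assoc)
    then show ?thesis
      using scc_prods_len_mult prods_len_mult[OF L_carrier d(1) nat_pow_in_prods_len[OF L_carrier l\<^sub>0(1)]]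
      by simp
  qed
  ultimately show ?thesis by simp
qed

lemma sub_digraph_iso_scc_pow_add_right:
  assumes c: "c \<in> R" "c \<in> normaliser G R"
  shows "sub_digraph_iso G L R (scc_pow n) (scc_pow (j + n))"
proof -
  let ?d = "c [^] j" and ?g = "l\<^sub>0 [^] n \<otimes> s"
  have d: "?d \<in> prods_len G R j" "?d \<in> normaliser G R"
    using nat_pow_in_prods_len[OF R_carrier c(1)] nat_pow_in_normaliser[OF R_carrier c(2)] by auto
  have dC: "?d \<in> carrier G" and dW: "?d \<in> W G R"
    using prods_len_closed[OF R_carrier d(1)] prods_len_subset_W[OF W_R_subgroup] d(1) by auto
  have gC: "?g \<in> carrier G" using l\<^sub>0(2) s_carrier by simp
  have "sub_digraph_iso G L R (scc_pow n) ((\<lambda>h. h \<otimes> ?d) ` scc_pow n)"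
    using inj_on_subset[OF inj_on_multc[OF dC]] arc_rmult_iff[OF d(2)] scc_subset_carrier
    unfolding scc_pow_def by (intro sub_digraph_iso_image) blast+
  moreover have "(\<lambda>h. h \<otimes> ?d) ` scc_pow n = scc_pow (j + n)"
  proof -
    have "balanced (l\<^sub>0 [^] j) ?d"
      unfolding balanced_def using d(1) nat_pow_in_prods_len[OF L_carrier l\<^sub>0(1)] by blast
    then have "reach (l\<^sub>0 [^] j \<otimes> ?g) (?g \<otimes> ?d)"
      using reach_balanced gC by blast
    then have "scc (?g \<otimes> ?d) = scc (l\<^sub>0 [^] j \<otimes> ?g)"
      using scc_eq_iff reach_closed gC l\<^sub>0(2) by (metis nat_pow_closed m_closed)
    also have "\<dots> = scc_pow (j + n)"
      using l\<^sub>0(2) s_carrier by (simp add: scc_pow_def m_assoc[symmetric] nat_pow_mult)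
    finally show ?thesis
      unfolding scc_pow_def using scc_rmult[OF dW gC] by simp
  qed
  ultimately show ?thesis by simp
qed

end

theorem mainTheorem17:
  fixes G (structure) and L R :: "'a set" and s :: 'a
  assumes "group G"
    and "L \<subseteq> carrier G" "L \<noteq> {}" "R \<subseteq> carrier G" "R \<noteq> {}"
    and "subgroup (W G L) G" "subgroup (W G R) G"
    and "s \<in> carrier G"
  defines "D \<equiv> double_coset G L s R"
    and "k \<equiv> min_sc_length G L R s"
  shows "D = \<Union>{C \<in> SCCs G L R. C \<subseteq> D}
     \<and> (k \<noteq> \<infinity> \<longrightarrow> finite {C \<in> SCCs G L R. C \<subseteq> D}
            \<and> enat (card {C \<in> SCCs G L R. C \<subseteq> D}) = k
            \<and> (\<forall>C1\<in>{C \<in> SCCs G L R. C \<subseteq> D}. \<forall>C2\<in>{C \<in> SCCs G L R. C \<subseteq> D}. C1 \<approx> C2))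
     \<and> (k = \<infinity> \<longrightarrow> infinite {C \<in> SCCs G L R. C \<subseteq> D})
     \<and> (k \<noteq> \<infinity> \<and> (L \<inter> normaliser G L \<noteq> {} \<or> R \<inter> normaliser G R \<noteq> {}) \<longrightarrow>
          (\<forall>C1\<in>{C \<in> SCCs G L R. C \<subseteq> D}. \<forall>C2\<in>{C \<in> SCCs G L R. C \<subseteq> D}.
              sub_digraph_iso G L R C1 C2))"
proof -
  interpret two_sided_double_coset G L R s
    using assms by (intro two_sided_double_coset.intro two_sided_digraph.intro
      two_sided_digraph_axioms.intro two_sided_double_coset_axioms.intro) auto
  have comps: "{C \<in> SCCs G L R. C \<subseteq> D} = range scc_pow"
    unfolding D_def by (rule SCCs_in_double_coset)
  \<comment> \<open>in particular \<open>k\<close> is never infinite\<close>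
  have k: "k = enat (min_period scc_pow)"
    unfolding k_def by (rule min_sc_length_eq)
  have equipollent: "scc_pow m \<approx> scc_pow n" for m n
    using scc_pow_eqpoll eqpoll_sym eqpoll_trans by metis
  have isomorphic: "sub_digraph_iso G L R (scc_pow m) (scc_pow n)"
    if "L \<inter> normaliser G L \<noteq> {} \<or> R \<inter> normaliser G R \<noteq> {}" for m n
  proof -
    obtain j where j: "scc_pow (j + m) = scc_pow n" using ex_scc_pow_add_eq by blast
    from that have "sub_digraph_iso G L R (scc_pow m) (scc_pow (j + m))"
      using sub_digraph_iso_scc_pow_add_left sub_digraph_iso_scc_pow_add_right by blast
    then show ?thesis unfolding j .
  qed
  show ?thesis
    using double_coset_eq_Union card_range_eq_min_period[of scc_pow, OF scc_pow_shift scc_pow_periodic]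
      equipollent isomorphic
    unfolding comps k D_def[symmetric] by auto
qed

end
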